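(* In the process described in the context, for any item $j$ we have $\Pr[j\in\mathcal R_2\mid j\in\mathcal R_1]=1-o(1)$ as $k\to\infty$.
   Context: Consider a $k$-CS-PIP instance: matrix $\vec A\in[0,1]^{m\times n}$ (entries $a_{ij}$), each column having at most $k$ nonzero entries, and an optimal solution $\vec x$ of the LP $\max\{\vec w\cdot\vec x:\vec A\vec x\le\vec 1,\ \sum_{j\in\mathrm{big}(i)}x_j\le1\ \forall i,\ \vec x\in[0,1]^n\}$. Let $\alpha=k^{0.4}$, $\ell=80\log(k/\alpha)$, and for row $i$: $\mathrm{big}(i)=\{j:a_{ij}>1/2\}$, $\mathrm{med}(i)=\{j:1/\ell\le a_{ij}\le 1/2\}$, $\mathrm{tiny}(i)=\{j:0<a_{ij}<1/\ell\}$. Let $\mathcal R_0$ contain each item $j$ independently with probability $\alpha x_j/k$. For $j\in\mathcal R_0$: a medium blocking event occurs for $j$ if some row $i$ with $j\in\mathrm{med}(i)$ has $|\mathrm{med}(i)\cap\mathcal R_0|\ge 3$; a tiny blocking event occurs for $j$ if some row $i$ with $j\in\mathrm{tiny}(i)$ has $\sum_{j'\ne j,\ j'\in(\mathrm{med}(i)\cup\mathrm{tiny}(i))\cap\mathcal R_0}a_{ij'}>1-a_{ij}$ or $|\mathrm{med}(i)\cap\mathcal R_0|\ge2$. Let $\mathcal R_1$ be the items of $\mathcal R_0$ for which neither event occurs. Build a directed graph $G$ on vertex set $\mathcal R_1$ with an edge $j\to j'$ ($j'\ne j$) iff there is a row $i$ with $a_{ij}>0$ and $a_{ij'}>1/2$.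 Let $d=\alpha+\sqrt{\alpha\log\alpha}$ and let $\mathcal R_2$ be the set of items of $\mathcal R_1$ whose out-degree in $G$ is at most $d$. *)

theory Defs
  imports "HOL-Probability.Probability"
begin

(* Items are 0..<n, rows are 0..<m; A i j is the entry a_ij; x j the LP solution. *)

definition alpha :: "nat \<Rightarrow> real" where
  "alpha k = real k powr 0.4"

definition ell :: "nat \<Rightarrow> real" where
  "ell k = 80 * ln (real k / alpha k)"

definition dbound :: "nat \<Rightarrow> real" where
  "dbound k = alpha k + sqrt (alpha k * ln (alpha k))"

definition big :: "(nat \<Rightarrow> nat \<Rightarrow> real) \<Rightarrow> nat \<Rightarrow> nat \<Rightarrow> nat set" where
  "big A n i = {j. j < n \<and> A i j > 1/2}"

definition med :: "nat \<Rightarrow> (nat \<Rightarrow> nat \<Rightarrow> real) \<Rightarrow> nat \<Rightarrow> nat \<Rightarrow> nat set" where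
  "med k A n i = {j. j < n \<and> 1 / ell k \<le> A i j \<and> A i j \<le> 1/2}"

definition tiny :: "nat \<Rightarrow> (nat \<Rightarrow> nat \<Rightarrow> real) \<Rightarrow> nat \<Rightarrow> nat \<Rightarrow> nat set" where
  "tiny k A n i = {j. j < n \<and> 0 < A i j \<and> A i j < 1 / ell k}"

definition kCS_matrix :: "nat \<Rightarrow> nat \<Rightarrow> nat \<Rightarrow> (nat \<Rightarrow> nat \<Rightarrow> real) \<Rightarrow> bool" where
  "kCS_matrix k m n A \<longleftrightarrow>
     (\<forall>i<m. \<forall>j<n. 0 \<le> A i j \<and> A i j \<le> 1) \<and>
     (\<forall>j<n. card {i. i < m \<and> A i j \<noteq> 0} \<le> k)"

definition LP_feasible :: "nat \<Rightarrow> nat \<Rightarrow> (nat \<Rightarrow> nat \<Rightarrow> real) \<Rightarrow> (nat \<Rightarrow> real) \<Rightarrow> bool" where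
  "LP_feasible m n A y \<longleftrightarrow>
     (\<forall>i<m. (\<Sum>j<n. A i j * y j) \<le> 1) \<and>
     (\<forall>i<m. (\<Sum>j\<in>big A n i. y j) \<le> 1) \<and>
     (\<forall>j<n. 0 \<le> y j \<and> y j \<le> 1)"

definition LP_optimal :: "nat \<Rightarrow> nat \<Rightarrow> (nat \<Rightarrow> nat \<Rightarrow> real) \<Rightarrow> (nat \<Rightarrow> real) \<Rightarrow> (nat \<Rightarrow> real) \<Rightarrow> bool" where
  "LP_optimal m n A w x \<longleftrightarrow> LP_feasible m n A x \<and>
     (\<forall>y. LP_feasible m n A y \<longrightarrow> (\<Sum>j<n. w j * y j) \<le> (\<Sum>j<n. w j * x j))"

(* distribution of R_0: item j is included independently with probability alpha x_j / k;
   an outcome is the indicator function of R_0 *)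
definition R0_pmf :: "nat \<Rightarrow> nat \<Rightarrow> (nat \<Rightarrow> real) \<Rightarrow> (nat \<Rightarrow> bool) pmf" where
  "R0_pmf k n x = Pi_pmf {..<n} False (\<lambda>j. bernoulli_pmf (alpha k * x j / real k))"

definition med_block :: "nat \<Rightarrow> nat \<Rightarrow> nat \<Rightarrow> (nat \<Rightarrow> nat \<Rightarrow> real) \<Rightarrow> nat set \<Rightarrow> nat \<Rightarrow> bool" where
  "med_block k m n A R j \<longleftrightarrow>
     (\<exists>i<m. j \<in> med k A n i \<and> card (med k A n i \<inter> R) \<ge> 3)"

definition tiny_block :: "nat \<Rightarrow> nat \<Rightarrow> nat \<Rightarrow> (nat \<Rightarrow> nat \<Rightarrow> real) \<Rightarrow> nat set \<Rightarrow> nat \<Rightarrow> bool" where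
  "tiny_block k m n A R j \<longleftrightarrow>
     (\<exists>i<m. j \<in> tiny k A n i \<and>
        ((\<Sum>j'\<in>((med k A n i \<union> tiny k A n i) \<inter> R) - {j}. A i j') > 1 - A i j
         \<or> card (med k A n i \<inter> R) \<ge> 2))"

definition R1 :: "nat \<Rightarrow> nat \<Rightarrow> nat \<Rightarrow> (nat \<Rightarrow> nat \<Rightarrow> real) \<Rightarrow> nat set \<Rightarrow> nat set" where
  "R1 k m n A R = {j \<in> R. \<not> med_block k m n A R j \<and> \<not> tiny_block k m n A R j}"

definition out_nbrs :: "nat \<Rightarrow> (nat \<Rightarrow> nat \<Rightarrow> real) \<Rightarrow> nat set \<Rightarrow> nat \<Rightarrow> nat set" where
  "out_nbrs m A S j = {j' \<in> S. j' \<noteq> j \<and> (\<exists>i<m. A i j > 0 \<and> A i j' > 1/2)}"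

definition R2 :: "nat \<Rightarrow> nat \<Rightarrow> nat \<Rightarrow> (nat \<Rightarrow> nat \<Rightarrow> real) \<Rightarrow> nat set \<Rightarrow> nat set" where
  "R2 k m n A R = (let S = R1 k m n A R in
     {j \<in> S. real (card (out_nbrs m A S j)) \<le> dbound k})"

end

theory Submission
  imports Defs
begin

text \<open>Fix j and let N be the set of items that are big in some row meeting column j; the
  out-neighbours of j in G lie in N \<inter> R0. The LP constraints on big entries give total weight
  at most k on N, so |N \<inter> R0| has mean at most \<alpha>, and Chebyshev's inequality bounds the
  probability that it exceeds \<alpha> + sqrt (\<alpha> ln \<alpha>) by 1 / ln \<alpha>. Given that j is sampled,
  survival of j into R1 is a decreasing event of the other coordinates, while |N \<inter> R0| > d is
  increasing and ignores j; Harris' inequality for product measures therefore shows that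
  conditioning on j \<in> R1 does not raise its probability.\<close>

definition bernoulli_prod_pmf :: "'a set \<Rightarrow> ('a \<Rightarrow> real) \<Rightarrow> ('a \<Rightarrow> bool) pmf" where
  "bernoulli_prod_pmf I p = Pi_pmf I False (\<lambda>i. bernoulli_pmf (p i))"

lemma finite_set_bernoulli_prod_pmf: "finite I \<Longrightarrow> finite (set_pmf (bernoulli_prod_pmf I p))"
  unfolding bernoulli_prod_pmf_def
  by (rule finite_subset[OF set_Pi_pmf_subset']) auto

lemma set_bernoulli_prod_pmf_subset:
  "finite I \<Longrightarrow> w \<in> set_pmf (bernoulli_prod_pmf I p) \<Longrightarrow> w i \<Longrightarrow> i \<in> I"
  using set_Pi_pmf_subset[of I False "\<lambda>i. bernoulli_pmf (p i)"]
  unfolding bernoulli_prod_pmf_def by auto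

lemma integrable_bernoulli_prod_pmf [simp, intro]:
  "finite I \<Longrightarrow> integrable (measure_pmf (bernoulli_prod_pmf I p)) (f :: _ \<Rightarrow> real)"
  by (rule integrable_measure_pmf_finite[OF finite_set_bernoulli_prod_pmf])

lemma expectation_bernoulli_prod_pmf_mono:
  fixes f g :: "('a \<Rightarrow> bool) \<Rightarrow> real"
  assumes "finite I" "\<And>w. f w \<le> g w"
  shows "measure_pmf.expectation (bernoulli_prod_pmf I p) f
       \<le> measure_pmf.expectation (bernoulli_prod_pmf I p) g"
  by (rule integral_mono) (use assms in auto)

lemma expectation_bernoulli_prod_pmf_insert:
  fixes h :: "('a \<Rightarrow> bool) \<Rightarrow> real"
  assumes "finite I" "a \<notin> I" "0 \<le> p a" "p a \<le> 1"
  shows "measure_pmf.expectation (bernoulli_prod_pmf (insert a I) p) h =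
     p a * measure_pmf.expectation (bernoulli_prod_pmf I p) (\<lambda>w. h (w(a:=True)))
   + (1 - p a) * measure_pmf.expectation (bernoulli_prod_pmf I p) (\<lambda>w. h (w(a:=False)))"
proof -
  let ?M = "bernoulli_prod_pmf I p"
  have "bernoulli_prod_pmf (insert a I) p
      = bind_pmf (bernoulli_pmf (p a)) (\<lambda>b. map_pmf (\<lambda>w. w(a:=b)) ?M)"
    unfolding bernoulli_prod_pmf_def using assms
    by (subst Pi_pmf_insert') (auto simp: map_pmf_def)
  then have "measure_pmf.expectation (bernoulli_prod_pmf (insert a I) p) h =
     (\<Sum>b\<in>UNIV. pmf (bernoulli_pmf (p a)) b *\<^sub>R measure_pmf.expectation (map_pmf (\<lambda>w. w(a:=b)) ?M) h)"
    by (simp only:) (rule pmf_expectation_bind, use assms finite_set_bernoulli_prod_pmf in auto)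
  also have "\<dots> = p a * measure_pmf.expectation ?M (\<lambda>w. h (w(a:=True)))
                 + (1 - p a) * measure_pmf.expectation ?M (\<lambda>w. h (w(a:=False)))"
    using assms by (simp add: UNIV_bool)
  finally show ?thesis .
qed

lemma expectation_bernoulli_prod_pmf_coord_mult:
  fixes h :: "('a \<Rightarrow> bool) \<Rightarrow> real"
  assumes "finite I" "a \<in> I" "0 \<le> p a" "p a \<le> 1" "\<And>w b. h (w(a:=b)) = h w"
  shows "measure_pmf.expectation (bernoulli_prod_pmf I p) (\<lambda>w. of_bool (w a) * h w)
       = p a * measure_pmf.expectation (bernoulli_prod_pmf I p) h"
proof -
  have I: "I = insert a (I - {a})" using assms by auto
  have "measure_pmf.expectation (bernoulli_prod_pmf I p) (\<lambda>w. of_bool (w a) * h w)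
      = p a * measure_pmf.expectation (bernoulli_prod_pmf (I - {a}) p) h"
    by (subst I, subst expectation_bernoulli_prod_pmf_insert) (use assms in auto)
  also have "measure_pmf.expectation (bernoulli_prod_pmf (I - {a}) p) h
      = measure_pmf.expectation (bernoulli_prod_pmf I p) h"
    by (subst (2) I, subst expectation_bernoulli_prod_pmf_insert) (use assms in \<open>auto simp: algebra_simps\<close>)
  finally show ?thesis .
qed

lemma expectation_bernoulli_prod_pmf_coord:
  assumes "finite I" "a \<in> I" "0 \<le> p a" "p a \<le> 1"
  shows "measure_pmf.expectation (bernoulli_prod_pmf I p) (\<lambda>w. of_bool (w a)) = p a"
  using expectation_bernoulli_prod_pmf_coord_mult[of I a p "\<lambda>_. 1"] assms by simp

lemma harris_inequality:
  fixes f g :: "('a \<Rightarrow> bool) \<Rightarrow> real"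
  assumes "finite I" "\<And>i. 0 \<le> p i" "\<And>i. p i \<le> 1" "mono f" "antimono g"
  shows "measure_pmf.expectation (bernoulli_prod_pmf I p) (\<lambda>w. f w * g w)
     \<le> measure_pmf.expectation (bernoulli_prod_pmf I p) f
       * measure_pmf.expectation (bernoulli_prod_pmf I p) g"
  using assms(1,4,5)
proof (induction I arbitrary: f g rule: finite_induct)
  case empty
  then show ?case by (simp add: bernoulli_prod_pmf_def)
next
  case (insert a I)
  let ?E = "measure_pmf.expectation (bernoulli_prod_pmf I p)"
  define q where "q = p a"
  have q: "0 \<le> q" "q \<le> 1" using assms q_def by auto
  have upd_mono: "w(a:=b) \<le> w'(a:=b)" if "w \<le> w'" for w w' :: "'a \<Rightarrow> bool" and b
    using that by (auto simp: le_fun_def)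
  have upd_False_True: "w(a:=False) \<le> w(a:=True)" for w :: "'a \<Rightarrow> bool"
    by (auto simp: le_fun_def)
  define F1 where "F1 = ?E (\<lambda>w. f (w(a:=True)))"
  define F0 where "F0 = ?E (\<lambda>w. f (w(a:=False)))"
  define G1 where "G1 = ?E (\<lambda>w. g (w(a:=True)))"
  define G0 where "G0 = ?E (\<lambda>w. g (w(a:=False)))"
  have F: "F0 \<le> F1"
    unfolding F0_def F1_def using insert.hyps(1)
    by (rule expectation_bernoulli_prod_pmf_mono) (rule monoD[OF insert.prems(1) upd_False_True])
  have G: "G1 \<le> G0"
    unfolding G0_def G1_def using insert.hyps(1)
    by (rule expectation_bernoulli_prod_pmf_mono) (rule antimonoD[OF insert.prems(2) upd_False_True])
  have mono_upd: "mono (\<lambda>w. f (w(a:=b)))" for b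
    by (rule monoI) (rule monoD[OF insert.prems(1) upd_mono])
  have antimono_upd: "antimono (\<lambda>w. g (w(a:=b)))" for b
    by (rule antimonoI) (rule antimonoD[OF insert.prems(2) upd_mono])
  have "measure_pmf.expectation (bernoulli_prod_pmf (insert a I) p) (\<lambda>w. f w * g w)
      = q * ?E (\<lambda>w. f (w(a:=True)) * g (w(a:=True)))
      + (1-q) * ?E (\<lambda>w. f (w(a:=False)) * g (w(a:=False)))"
    unfolding q_def by (rule expectation_bernoulli_prod_pmf_insert) (use insert assms in auto)
  also have "\<dots> \<le> q * (F1 * G1) + (1-q) * (F0 * G0)"
    unfolding F1_def G1_def F0_def G0_def
    by (intro add_mono mult_left_mono insert.IH mono_upd antimono_upd) (use q in auto)
  also have "\<dots> \<le> (q * F1 + (1-q) * F0) * (q * G1 + (1-q) * G0)"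
  proof -
    have "(q * F1 + (1-q) * F0) * (q * G1 + (1-q) * G0) - (q * (F1 * G1) + (1-q) * (F0 * G0))
        = q * (1-q) * ((F1 - F0) * (G0 - G1))"
      by (simp add: algebra_simps)
    moreover have "0 \<le> q * (1-q) * ((F1 - F0) * (G0 - G1))"
      using q F G by simp
    ultimately show ?thesis by linarith
  qed
  also have "\<dots> = measure_pmf.expectation (bernoulli_prod_pmf (insert a I) p) f
                 * measure_pmf.expectation (bernoulli_prod_pmf (insert a I) p) g"
    unfolding F1_def F0_def G1_def G0_def q_def
    by (subst (1 2) expectation_bernoulli_prod_pmf_insert) (use insert assms in auto)
  finally show ?case .
qed

definition centred_count :: "'a set \<Rightarrow> ('a \<Rightarrow> real) \<Rightarrow> ('a \<Rightarrow> bool) \<Rightarrow> real" where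
  "centred_count N p w = (\<Sum>i\<in>N. of_bool (w i) - p i)"

lemma expectation_centred_count_sq:
  assumes "finite I" "N \<subseteq> I" "\<And>i. 0 \<le> p i" "\<And>i. p i \<le> 1"
  shows "measure_pmf.expectation (bernoulli_prod_pmf I p) (\<lambda>w. (centred_count N p w)^2)
       = (\<Sum>i\<in>N. p i * (1 - p i))"
proof -
  let ?E = "measure_pmf.expectation (bernoulli_prod_pmf I p)"
  have "finite N" using assms finite_subset by blast
  then show ?thesis
    using assms(2)
  proof (induction N rule: finite_induct)
    case empty
    then show ?case by (simp add: centred_count_def)
  next
    case (insert a N)
    let ?X = "\<lambda>w. of_bool (w a) - p a" and ?Z = "centred_count N p"
    have a: "a \<in> I" and N: "N \<subseteq> I" using insert.prems by auto
    have "?E (\<lambda>w. ?X w * ?Z w) = ?E (\<lambda>w. of_bool (w a) * ?Z w) - p a * ?E ?Z"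
      by (simp add: left_diff_distrib Bochner_Integration.integral_diff assms(1))
    also have "?E (\<lambda>w. of_bool (w a) * ?Z w) = p a * ?E ?Z"
      by (rule expectation_bernoulli_prod_pmf_coord_mult)
         (use assms a insert.hyps in \<open>auto simp: centred_count_def intro: sum.cong\<close>)
    finally have cross: "?E (\<lambda>w. ?X w * ?Z w) = 0" by simp
    have "?E (\<lambda>w. (?X w)^2) = ?E (\<lambda>w. (1 - 2 * p a) * of_bool (w a) + (p a)^2)"
      by (rule Bochner_Integration.integral_cong) (auto simp: power2_eq_square algebra_simps)
    also have "\<dots> = p a * (1 - p a)"
      using expectation_bernoulli_prod_pmf_coord[OF assms(1) a assms(3,4)]
      by (simp add: Bochner_Integration.integral_add assms(1) power2_eq_square algebra_simps)
    finally have square: "?E (\<lambda>w. (?X w)^2) = p a * (1 - p a)" .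
    have "(\<lambda>w. (centred_count (insert a N) p w)^2) = (\<lambda>w. (?X w)^2 + 2 * (?X w * ?Z w) + (?Z w)^2)"
      using insert.hyps by (auto simp: centred_count_def power2_eq_square algebra_simps)
    then have "?E (\<lambda>w. (centred_count (insert a N) p w)^2)
        = ?E (\<lambda>w. (?X w)^2) + 2 * ?E (\<lambda>w. ?X w * ?Z w) + ?E (\<lambda>w. (?Z w)^2)"
      by (simp add: Bochner_Integration.integral_add assms(1))
    then show ?case
      using square cross insert.IH[OF N] insert.hyps by simp
  qed
qed

lemma prob_count_exceeds_mean_le:
  assumes "finite I" "N \<subseteq> I" "\<And>i. 0 \<le> p i" "\<And>i. p i \<le> 1" "0 < t"
  shows "measure_pmf.prob (bernoulli_prod_pmf I p)
           {w. (\<Sum>i\<in>N. p i) + t < real (card (N \<inter> {i. w i}))} \<le> (\<Sum>i\<in>N. p i) / t^2"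
proof -
  let ?M = "bernoulli_prod_pmf I p"
  define Bad where "Bad = {w. (\<Sum>i\<in>N. p i) + t < real (card (N \<inter> {i. w i}))}"
  have fin: "finite N" using assms finite_subset by blast
  have count: "real (card (N \<inter> {i. w i})) = centred_count N p w + (\<Sum>i\<in>N. p i)" for w
  proof -
    have "real (card (N \<inter> {i. w i})) = (\<Sum>i\<in>N. of_bool (w i))"
      using fin by (simp add: Int_def sum.inter_filter[symmetric])
    then show ?thesis by (simp add: centred_count_def sum_subtractf)
  qed
  have pointwise: "t^2 * indicator Bad w \<le> (centred_count N p w)^2" for w
  proof (cases "w \<in> Bad")
    case True
    then have "t \<le> centred_count N p w" using count[of w] unfolding Bad_def by simp
    then show ?thesis using True assms(5) by (simp add: power_mono)
  qed simp
  have "t^2 * measure_pmf.prob ?M Bad = measure_pmf.expectation ?M (\<lambda>w. t^2 * indicator Bad w)"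
    by simp
  also have "\<dots> \<le> measure_pmf.expectation ?M (\<lambda>w. (centred_count N p w)^2)"
    by (rule expectation_bernoulli_prod_pmf_mono[OF assms(1) pointwise])
  also have "\<dots> \<le> (\<Sum>i\<in>N. p i)"
    unfolding expectation_centred_count_sq[OF assms(1-4)]
    by (rule sum_mono) (use assms(3,4) in \<open>auto intro: mult_left_le\<close>)
  finally show ?thesis
    unfolding Bad_def using assms(5) by (simp add: field_simps)
qed

lemma prob_coord_down_inter_up_le:
  fixes D B :: "('a \<Rightarrow> bool) set"
  assumes "finite I" "a \<in> I" "\<And>i. 0 \<le> p i" "\<And>i. p i \<le> 1"
    and down: "\<And>u v. u \<le> v \<Longrightarrow> v \<in> D \<Longrightarrow> u \<in> D"
    and up: "\<And>u v. u \<le> v \<Longrightarrow> u \<in> B \<Longrightarrow> v \<in> B"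
    and "\<And>w b. w(a:=b) \<in> D \<longleftrightarrow> w \<in> D" "\<And>w b. w(a:=b) \<in> B \<longleftrightarrow> w \<in> B"
  shows "measure_pmf.prob (bernoulli_prod_pmf I p) ({w. w a} \<inter> D \<inter> B)
       \<le> measure_pmf.prob (bernoulli_prod_pmf I p) ({w. w a} \<inter> D)
         * measure_pmf.prob (bernoulli_prod_pmf I p) B"
proof -
  let ?E = "measure_pmf.expectation (bernoulli_prod_pmf I p)"
  have mono_B: "mono (indicator B :: _ \<Rightarrow> real)"
    using up by (auto intro!: monoI simp: indicator_def)
  have antimono_D: "antimono (indicator D :: _ \<Rightarrow> real)"
    using down by (auto intro!: antimonoI simp: indicator_def)
  have prob_eq: "measure_pmf.prob (bernoulli_prod_pmf I p) X = ?E (indicator X)" for X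
    by simp
  have "measure_pmf.prob (bernoulli_prod_pmf I p) ({w. w a} \<inter> D \<inter> B)
      = ?E (\<lambda>w. of_bool (w a) * (indicator B w * indicator D w))"
    unfolding prob_eq by (rule Bochner_Integration.integral_cong) (auto simp: indicator_def)
  also have "\<dots> = p a * ?E (\<lambda>w. indicator B w * indicator D w)"
    by (rule expectation_bernoulli_prod_pmf_coord_mult) (use assms in \<open>auto simp: indicator_def\<close>)
  also have "\<dots> \<le> p a * (?E (indicator B) * ?E (indicator D))"
    by (intro mult_left_mono harris_inequality mono_B antimono_D) (use assms in auto)
  also have "\<dots> = ?E (indicator B) * measure_pmf.prob (bernoulli_prod_pmf I p) ({w. w a} \<inter> D)"
  proof -
    have "p a * ?E (indicator D) = ?E (\<lambda>w. of_bool (w a) * indicator D w)"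
      by (rule expectation_bernoulli_prod_pmf_coord_mult[symmetric]) (use assms in \<open>auto simp: indicator_def\<close>)
    also have "\<dots> = measure_pmf.prob (bernoulli_prod_pmf I p) ({w. w a} \<inter> D)"
      unfolding prob_eq by (rule Bochner_Integration.integral_cong) (auto simp: indicator_def)
    finally show ?thesis by simp
  qed
  finally show ?thesis by (simp add: mult.commute)
qed

lemma med_block_mono:
  assumes "R \<subseteq> R'" "med_block k m n A R j"
  shows "med_block k m n A R' j"
proof -
  obtain i where i: "i < m" "j \<in> med k A n i" "card (med k A n i \<inter> R) \<ge> 3"
    using assms(2) unfolding med_block_def by auto
  have "card (med k A n i \<inter> R) \<le> card (med k A n i \<inter> R')"
    by (rule card_mono) (use assms in \<open>auto simp: med_def\<close>)
  then show ?thesis using i unfolding med_block_def by auto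
qed

lemma tiny_block_mono:
  assumes "kCS_matrix k m n A" "R \<subseteq> R'" "tiny_block k m n A R j"
  shows "tiny_block k m n A R' j"
proof -
  obtain i where i: "i < m" "j \<in> tiny k A n i"
    "(\<Sum>j'\<in>((med k A n i \<union> tiny k A n i) \<inter> R) - {j}. A i j') > 1 - A i j
       \<or> card (med k A n i \<inter> R) \<ge> 2"
    using assms(3) unfolding tiny_block_def by auto
  have "card (med k A n i \<inter> R) \<le> card (med k A n i \<inter> R')"
    by (rule card_mono) (use assms in \<open>auto simp: med_def\<close>)
  moreover have "(\<Sum>j'\<in>((med k A n i \<union> tiny k A n i) \<inter> R) - {j}. A i j')
      \<le> (\<Sum>j'\<in>((med k A n i \<union> tiny k A n i) \<inter> R') - {j}. A i j')"
    by (rule sum_mono2) (use assms i(1) in \<open>auto simp: kCS_matrix_def med_def tiny_def\<close>)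
  ultimately show ?thesis using i unfolding tiny_block_def by force
qed

text \<open>Each of the at most k rows meeting column j carries LP weight at most 1 on its big entries.\<close>

lemma sum_out_nbrs_le:
  assumes "kCS_matrix k m n A" "LP_feasible m n A x" "j < n"
  shows "(\<Sum>j'\<in>out_nbrs m A {..<n} j. x j') \<le> real k"
proof -
  define rows where "rows = {i. i < m \<and> A i j \<noteq> 0}"
  let ?N = "out_nbrs m A {..<n} j"
  have x_nonneg: "\<And>i. i < n \<Longrightarrow> 0 \<le> x i" using assms(2) unfolding LP_feasible_def by auto
  have "(\<Sum>j'\<in>?N. x j') \<le> (\<Sum>j'\<in>?N. \<Sum>i\<in>rows. of_bool (j' \<in> big A n i) * x j')"
  proof (rule sum_mono)
    fix j' assume "j' \<in> ?N"
    then obtain i where i: "i < m" "A i j > 0" "A i j' > 1/2" "j' < n"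
      unfolding out_nbrs_def by auto
    then have "x j' = of_bool (j' \<in> big A n i) * x j'" by (simp add: big_def)
    also have "\<dots> \<le> (\<Sum>i\<in>rows. of_bool (j' \<in> big A n i) * x j')"
      by (rule member_le_sum) (use i x_nonneg in \<open>auto simp: rows_def\<close>)
    finally show "x j' \<le> (\<Sum>i\<in>rows. of_bool (j' \<in> big A n i) * x j')" .
  qed
  also have "\<dots> = (\<Sum>i\<in>rows. \<Sum>j'\<in>?N. of_bool (j' \<in> big A n i) * x j')"
    by (rule sum.swap)
  also have "\<dots> \<le> (\<Sum>i\<in>rows. 1)"
  proof (rule sum_mono)
    fix i assume "i \<in> rows"
    have "finite ?N" unfolding out_nbrs_def by simp
    have "(\<Sum>j'\<in>?N. of_bool (j' \<in> big A n i) * x j') = (\<Sum>j'\<in>?N. if j' \<in> big A n i then x j' else 0)"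
      by (rule sum.cong) auto
    also have "\<dots> = (\<Sum>j'\<in>{j'\<in>?N. j' \<in> big A n i}. x j')"
      by (rule sum.inter_filter[symmetric]) fact
    also have "\<dots> \<le> (\<Sum>j'\<in>big A n i. x j')"
      by (rule sum_mono2) (use x_nonneg in \<open>auto simp: big_def\<close>)
    also have "\<dots> \<le> 1" using assms(2) \<open>i \<in> rows\<close> unfolding LP_feasible_def rows_def by auto
    finally show "(\<Sum>j'\<in>?N. of_bool (j' \<in> big A n i) * x j') \<le> 1" .
  qed
  also have "\<dots> \<le> real k"
    using assms(1,3) unfolding kCS_matrix_def rows_def by auto
  finally show ?thesis .
qed

lemma alpha_gt_1: "2 \<le> k \<Longrightarrow> 1 < alpha k"
  using powr_less_mono2[of "0.4" 1 "real k"] by (simp add: alpha_def)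

lemma alpha_le: "alpha k \<le> real k"
  using powr_mono[of "0.4" 1 "real k"] by (cases "k = 0") (auto simp: alpha_def)

text \<open>The value 0 at non-items is irrelevant for the distribution but makes every parameter a
  probability.\<close>

definition R0_prob :: "nat \<Rightarrow> nat \<Rightarrow> (nat \<Rightarrow> real) \<Rightarrow> nat \<Rightarrow> real" where
  "R0_prob k n x i = (if i < n then alpha k * x i / real k else 0)"

lemma R0_pmf_eq_bernoulli_prod_pmf: "R0_pmf k n x = bernoulli_prod_pmf {..<n} (R0_prob k n x)"
  unfolding R0_pmf_def bernoulli_prod_pmf_def R0_prob_def by (rule Pi_pmf_cong) auto

lemma R0_prob_bounds:
  assumes "LP_feasible m n A x"
  shows "0 \<le> R0_prob k n x i" "R0_prob k n x i \<le> 1"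
proof -
  have x: "i < n \<Longrightarrow> 0 \<le> x i \<and> x i \<le> 1" using assms unfolding LP_feasible_def by auto
  have "0 \<le> alpha k" by (simp add: alpha_def)
  then show "0 \<le> R0_prob k n x i" using x by (simp add: R0_prob_def)
  have "alpha k * x i \<le> real k * 1" if "i < n"
    using x[OF that] alpha_le[of k] \<open>0 \<le> alpha k\<close> by (intro mult_mono) auto
  then show "R0_prob k n x i \<le> 1" by (simp add: R0_prob_def divide_le_eq)
qed

lemma prob_many_out_nbrs_le:
  assumes "2 \<le> k" "kCS_matrix k m n A" "LP_feasible m n A x" "j < n"
  shows "measure_pmf.prob (R0_pmf k n x)
           {w. dbound k < real (card (out_nbrs m A {..<n} j \<inter> {i. w i}))} \<le> 1 / ln (alpha k)"
proof -
  let ?N = "out_nbrs m A {..<n} j" and ?p = "R0_prob k n x"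
  define \<alpha> where "\<alpha> = alpha k"
  define t where "t = sqrt (\<alpha> * ln \<alpha>)"
  have "1 < \<alpha>" unfolding \<alpha>_def using alpha_gt_1[OF assms(1)] .
  then have "0 < t" and t_sq: "t^2 = \<alpha> * ln \<alpha>" unfolding t_def by auto
  have N: "?N \<subseteq> {..<n}" unfolding out_nbrs_def by auto
  have "(\<Sum>i\<in>?N. ?p i) = \<alpha> / real k * (\<Sum>i\<in>?N. x i)"
    unfolding sum_distrib_left using N by (intro sum.cong) (auto simp: R0_prob_def \<alpha>_def)
  also have "\<dots> \<le> \<alpha> / real k * real k"
    using sum_out_nbrs_le[OF assms(2-4)] \<open>1 < \<alpha>\<close> by (intro mult_left_mono) auto
  finally have mean: "(\<Sum>i\<in>?N. ?p i) \<le> \<alpha>" using assms(1) by simp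
  have "measure_pmf.prob (R0_pmf k n x) {w. dbound k < real (card (?N \<inter> {i. w i}))}
      \<le> measure_pmf.prob (R0_pmf k n x) {w. (\<Sum>i\<in>?N. ?p i) + t < real (card (?N \<inter> {i. w i}))}"
    using mean by (intro measure_pmf.finite_measure_mono) (auto simp: dbound_def t_def \<alpha>_def)
  also have "\<dots> \<le> (\<Sum>i\<in>?N. ?p i) / t^2"
    unfolding R0_pmf_eq_bernoulli_prod_pmf
    by (rule prob_count_exceeds_mean_le) (use N R0_prob_bounds[OF assms(3)] \<open>0 < t\<close> in auto)
  also have "\<dots> \<le> \<alpha> / (\<alpha> * ln \<alpha>)"
    unfolding t_sq using mean \<open>1 < \<alpha>\<close> by (intro divide_right_mono) auto
  finally show ?thesis using \<open>1 < \<alpha>\<close> by (simp add: \<alpha>_def)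
qed

lemma mem_R1_iff:
  "j \<in> R1 k m n A {i. w i} \<longleftrightarrow>
     w j \<and> \<not> med_block k m n A (insert j {i. w i}) j \<and> \<not> tiny_block k m n A (insert j {i. w i}) j"
proof (cases "w j")
  case True
  then have "insert j {i. w i} = {i. w i}" by auto
  then show ?thesis using True unfolding R1_def by simp
qed (simp add: R1_def)

lemma card_out_nbrs_R1_le:
  assumes "S \<subseteq> {..<n}"
  shows "card (out_nbrs m A (R1 k m n A S) j) \<le> card (out_nbrs m A {..<n} j \<inter> S)"
  by (rule card_mono) (use assms in \<open>auto simp: out_nbrs_def R1_def\<close>)

lemma prob_R1_inter_many_out_nbrs_le:
  fixes d :: real
  assumes "kCS_matrix k m n A" "LP_feasible m n A x" "j < n"
  defines "Bad \<equiv> {w. d < real (card (out_nbrs m A {..<n} j \<inter> {i. w i}))}"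
  shows "measure_pmf.prob (R0_pmf k n x) ({\<omega>. j \<in> R1 k m n A {i. \<omega> i}} \<inter> Bad)
       \<le> measure_pmf.prob (R0_pmf k n x) {\<omega>. j \<in> R1 k m n A {i. \<omega> i}}
         * measure_pmf.prob (R0_pmf k n x) Bad"
proof -
  let ?N = "out_nbrs m A {..<n} j"
  define D where "D = {w. \<not> med_block k m n A (insert j {i. w i}) j
                         \<and> \<not> tiny_block k m n A (insert j {i. w i}) j}"
  have "{\<omega>. j \<in> R1 k m n A {i. \<omega> i}} = {w. w j} \<inter> D"
    unfolding D_def mem_R1_iff by blast
  moreover have "measure_pmf.prob (bernoulli_prod_pmf {..<n} (R0_prob k n x)) ({w. w j} \<inter> D \<inter> Bad)
      \<le> measure_pmf.prob (bernoulli_prod_pmf {..<n} (R0_prob k n x)) ({w. w j} \<inter> D)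
        * measure_pmf.prob (bernoulli_prod_pmf {..<n} (R0_prob k n x)) Bad"
  proof (rule prob_coord_down_inter_up_le)
    show "finite {..<n}" "j \<in> {..<n}" using assms(3) by simp_all
    show "0 \<le> R0_prob k n x i" "R0_prob k n x i \<le> 1" for i
      using R0_prob_bounds[OF assms(2)] by simp_all
  next
    fix u v :: "nat \<Rightarrow> bool" assume "u \<le> v"
    then have sub: "insert j {i. u i} \<subseteq> insert j {i. v i}" by (auto simp: le_fun_def)
    show "v \<in> D \<Longrightarrow> u \<in> D"
      unfolding D_def using med_block_mono[OF sub] tiny_block_mono[OF assms(1) sub] by auto
    have "card (?N \<inter> {i. u i}) \<le> card (?N \<inter> {i. v i})"
      using \<open>u \<le> v\<close> by (intro card_mono) (auto simp: le_fun_def out_nbrs_def)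
    then show "u \<in> Bad \<Longrightarrow> v \<in> Bad" unfolding Bad_def by auto
  next
    fix w :: "nat \<Rightarrow> bool" and b
    have "insert j {i. (w(j:=b)) i} = insert j {i. w i}" by auto
    then show "w(j:=b) \<in> D \<longleftrightarrow> w \<in> D" unfolding D_def by (simp only: mem_Collect_eq)
    have "?N \<inter> {i. (w(j:=b)) i} = ?N \<inter> {i. w i}" by (auto simp: out_nbrs_def)
    then show "w(j:=b) \<in> Bad \<longleftrightarrow> w \<in> Bad" unfolding Bad_def by (simp only: mem_Collect_eq)
  qed
  ultimately show ?thesis by (simp add: R0_pmf_eq_bernoulli_prod_pmf)
qed

lemma prob_R1_mult_le_prob_R2:
  assumes "2 \<le> k" "kCS_matrix k m n A" "LP_feasible m n A x" "j < n"
  shows "measure_pmf.prob (R0_pmf k n x) {\<omega>. j \<in> R1 k m n A {i. \<omega> i}} * (1 - 1 / ln (alpha k))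
       \<le> measure_pmf.prob (R0_pmf k n x) {\<omega>. j \<in> R2 k m n A {i. \<omega> i}}"
proof -
  let ?M = "R0_pmf k n x" and ?N = "out_nbrs m A {..<n} j"
  define Bad where "Bad = {w. dbound k < real (card (?N \<inter> {i. w i}))}"
  define E1 where "E1 = {\<omega>. j \<in> R1 k m n A {i. \<omega> i}}"
  define E2 where "E2 = {\<omega>. j \<in> R2 k m n A {i. \<omega> i}}"
  have "measure_pmf.prob ?M (E1 \<inter> Bad) \<le> measure_pmf.prob ?M E1 * measure_pmf.prob ?M Bad"
    unfolding E1_def Bad_def by (rule prob_R1_inter_many_out_nbrs_le[OF assms(2-4)])
  moreover have "measure_pmf.prob ?M E1 \<le> measure_pmf.prob ?M E2 + measure_pmf.prob ?M (E1 \<inter> Bad)"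
  proof -
    have "E1 \<inter> set_pmf ?M \<subseteq> E2 \<union> (E1 \<inter> Bad)"
    proof safe
      fix u assume u: "u \<in> E1" "u \<in> set_pmf ?M" "u \<notin> E2"
      let ?R1 = "R1 k m n A {i. u i}"
      have "{i. u i} \<subseteq> {..<n}"
        using set_bernoulli_prod_pmf_subset[of "{..<n}" u] u(2)
        unfolding R0_pmf_eq_bernoulli_prod_pmf by auto
      then have "card (out_nbrs m A ?R1 j) \<le> card (?N \<inter> {i. u i})"
        by (rule card_out_nbrs_R1_le)
      moreover have "dbound k < real (card (out_nbrs m A ?R1 j))"
        using u(1,3) unfolding E1_def E2_def R2_def Let_def by auto
      ultimately show "u \<in> Bad" unfolding Bad_def by simp
    qed
    then have "measure_pmf.prob ?M (E1 \<inter> set_pmf ?M) \<le> measure_pmf.prob ?M (E2 \<union> (E1 \<inter> Bad))"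
      by (rule measure_pmf.finite_measure_mono) simp
    also have "\<dots> \<le> measure_pmf.prob ?M E2 + measure_pmf.prob ?M (E1 \<inter> Bad)"
      by (rule measure_subadditive) (simp_all add: measure_pmf.emeasure_eq_measure)
    finally show ?thesis by (simp add: measure_Int_set_pmf)
  qed
  moreover have "measure_pmf.prob ?M E1 * measure_pmf.prob ?M Bad \<le> measure_pmf.prob ?M E1 * (1 / ln (alpha k))"
    unfolding Bad_def by (intro mult_left_mono prob_many_out_nbrs_le[OF assms]) simp
  ultimately have "measure_pmf.prob ?M E1 * (1 - 1 / ln (alpha k)) \<le> measure_pmf.prob ?M E2"
    unfolding right_diff_distrib mult_1_right by linarith
  then show ?thesis unfolding E1_def E2_def .
qed

lemma inverse_ln_alpha_tendsto_0: "(\<lambda>k. if 2 \<le> k then 1 / ln (alpha k) else 1) \<longlonglongrightarrow> 0"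
proof -
  have "filterlim (\<lambda>k::nat. 0.4 * ln (real k)) at_top sequentially"
    by (intro filterlim_tendsto_pos_mult_at_top[OF tendsto_const]
          filterlim_compose[OF ln_at_top filterlim_real_sequentially]) simp
  then have "(\<lambda>k::nat. inverse (0.4 * ln (real k))) \<longlonglongrightarrow> 0"
    by (rule tendsto_inverse_0_at_top)
  moreover have "\<forall>\<^sub>F k in sequentially.
      inverse (0.4 * ln (real k)) = (if 2 \<le> k then 1 / ln (alpha k) else 1)"
    using eventually_ge_at_top[of "2::nat"]
    by eventually_elim (auto simp: alpha_def ln_powr inverse_eq_divide)
  ultimately show ?thesis by (rule Lim_transform_eventually)
qed

theorem lemma2:
  "\<exists>\<epsilon> :: nat \<Rightarrow> real. \<epsilon> \<longlonglongrightarrow> 0 \<and>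
    (\<forall>k m n A w x j.
       kCS_matrix k m n A \<and> (\<forall>j<n. 0 \<le> w j) \<and> LP_optimal m n A w x \<and> j < n \<and>
       measure_pmf.prob (R0_pmf k n x) {\<omega>. j \<in> R1 k m n A {i. \<omega> i}} > 0 \<longrightarrow>
       measure_pmf.prob (R0_pmf k n x) {\<omega>. j \<in> R2 k m n A {i. \<omega> i}}
         / measure_pmf.prob (R0_pmf k n x) {\<omega>. j \<in> R1 k m n A {i. \<omega> i}}
       \<ge> 1 - \<epsilon> k)"
proof (intro exI conjI allI impI)
  show "(\<lambda>k. if 2 \<le> k then 1 / ln (alpha k) else 1) \<longlonglongrightarrow> 0"
    by (rule inverse_ln_alpha_tendsto_0)
next
  fix k m n A w x j
  assume h: "kCS_matrix k m n A \<and> (\<forall>j<n. 0 \<le> w j) \<and> LP_optimal m n A w x \<and> j < n \<and>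
       measure_pmf.prob (R0_pmf k n x) {\<omega>. j \<in> R1 k m n A {i. \<omega> i}} > 0"
  show "measure_pmf.prob (R0_pmf k n x) {\<omega>. j \<in> R2 k m n A {i. \<omega> i}}
         / measure_pmf.prob (R0_pmf k n x) {\<omega>. j \<in> R1 k m n A {i. \<omega> i}}
       \<ge> 1 - (if 2 \<le> k then 1 / ln (alpha k) else 1)"
  proof (cases "2 \<le> k")
    case True
    then show ?thesis
      using prob_R1_mult_le_prob_R2[OF True, of m n A x j] h
      by (simp add: LP_optimal_def le_divide_eq mult.commute)
  qed simp
qed

end
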